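(* There exists a $3$-subset-regular, $5$-uniform, intersecting family $\mathcal{F}\subseteq\binom{[11]}{5}$ with $$|\mathcal{F}|=66=\frac{\binom{11}{5}}{1+\binom{6}{5}\big/\binom{1}{0}},$$ i.e. attaining equality in the bound $|\mathcal{F}|\leq \binom{n}{k}\Big/\Big(1+\binom{n-k}{k}\big/\binom{n-k-s-2}{k-s-2}\Big)$ for $(n,k,s)=(11,5,3)$.
   Context: A family $\mathcal{F}\subseteq 2^{[n]}$ is $s$-subset-regular if every $s$-element subset of $[n]$ is contained in the same number of members of $\mathcal{F}$. A family is $k$-uniform if all members have size $k$, and intersecting if any two members have nonempty intersection. *)

theory Defs
  imports Complex_Main
begin

definition subset_regular :: "nat \<Rightarrow> nat \<Rightarrow> nat set set \<Rightarrow> bool" where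
  "subset_regular n s F \<longleftrightarrow>
     (\<exists>c. \<forall>S. S \<subseteq> {1..n} \<and> card S = s \<longrightarrow> card {A \<in> F. S \<subseteq> A} = c)"

definition uniform :: "nat \<Rightarrow> nat set set \<Rightarrow> bool" where
  "uniform k F \<longleftrightarrow> (\<forall>A\<in>F. card A = k)"

definition intersecting :: "nat set set \<Rightarrow> bool" where
  "intersecting F \<longleftrightarrow> (\<forall>A\<in>F. \<forall>B\<in>F. A \<inter> B \<noteq> {})"

end

theory Submission
  imports Defs
begin

text \<open>The witness is the Steiner system S(4,5,11): 66 blocks of size 5 with every 4-subset of
  [11] in exactly one block. Counting the blocks through a fixed 3-set by their fourth point
  shows that every 3-set lies in (11 - 3) / (5 - 3) = 4 blocks; moreover any two blocks meet.\<close>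

lemma card_set_map_set_sorted:
  assumes "\<forall>l\<in>set Ls. sorted l \<and> distinct l" and "distinct Ls"
  shows "card (set (map set Ls)) = length Ls"
proof -
  have "inj_on set (set Ls)"
    using assms(1) by (auto intro!: inj_onI sorted_distinct_set_unique)
  then have "distinct (map set Ls)"
    using assms(2) by (simp add: distinct_map)
  then show ?thesis
    by (metis distinct_card length_map)
qed

lemma subset_regular_3_set_map_set:
  assumes sorted: "\<forall>l\<in>set Ls. sorted l \<and> distinct l" and "distinct Ls"
    and count: "\<forall>a b c. 1 \<le> a \<and> a < b \<and> b < c \<and> c \<le> n \<longrightarrow>
       length (filter (\<lambda>l. a \<in> set l \<and> b \<in> set l \<and> c \<in> set l) Ls) = r"
  shows "subset_regular n 3 (set (map set Ls))"
  unfolding subset_regular_def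
proof (intro exI[of _ r] allI impI)
  fix S :: "nat set"
  assume S: "S \<subseteq> {1..n} \<and> card S = 3"
  then have "finite S"
    using finite_subset by blast
  with S have "length (sorted_list_of_set S) = 3"
    by simp
  then obtain a b c where abc: "sorted_list_of_set S = [a, b, c]"
    by (auto simp: length_Suc_conv numeral_eq_Suc simp del: length_sorted_list_of_set)
  then have "a < b" "b < c"
    using strict_sorted_list_of_set[of S] by auto
  moreover have "S = {a, b, c}"
    using abc set_sorted_list_of_set[OF \<open>finite S\<close>] by simp
  ultimately have "1 \<le> a" "c \<le> n"
    using S by auto
  define Ms where "Ms = filter (\<lambda>l. a \<in> set l \<and> b \<in> set l \<and> c \<in> set l) Ls"
  have "{A \<in> set (map set Ls). S \<subseteq> A} = set (map set Ms)"
    using \<open>S = {a, b, c}\<close> unfolding Ms_def by auto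
  moreover have "card (set (map set Ms)) = length Ms"
    using sorted \<open>distinct Ls\<close> unfolding Ms_def by (intro card_set_map_set_sorted) auto
  moreover have "length Ms = r"
    using count \<open>1 \<le> a\<close> \<open>a < b\<close> \<open>b < c\<close> \<open>c \<le> n\<close> unfolding Ms_def by blast
  ultimately show "card {A \<in> set (map set Ls). S \<subseteq> A} = r"
    by simp
qed

definition steiner_4_5_11 :: "nat list list" where
  "steiner_4_5_11 =
    [[1,2,3,4,6], [1,2,3,5,11], [1,2,3,7,10], [1,2,3,8,9], [1,2,4,5,8], [1,2,4,7,9],
     [1,2,4,10,11], [1,2,5,6,7], [1,2,5,9,10], [1,2,6,8,10], [1,2,6,9,11], [1,2,7,8,11],
     [1,3,4,5,9], [1,3,4,7,11], [1,3,4,8,10], [1,3,5,6,10], [1,3,5,7,8], [1,3,6,7,9],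
     [1,3,6,8,11], [1,3,9,10,11], [1,4,5,6,11], [1,4,5,7,10], [1,4,6,7,8], [1,4,6,9,10],
     [1,4,8,9,11], [1,5,6,8,9], [1,5,7,9,11], [1,5,8,10,11], [1,6,7,10,11], [1,7,8,9,10],
     [2,3,4,5,7], [2,3,4,8,11], [2,3,4,9,10], [2,3,5,6,9], [2,3,5,8,10], [2,3,6,7,8],
     [2,3,6,10,11], [2,3,7,9,11], [2,4,5,6,10], [2,4,5,9,11], [2,4,6,7,11], [2,4,6,8,9],
     [2,4,7,8,10], [2,5,6,8,11], [2,5,7,8,9], [2,5,7,10,11], [2,6,7,9,10], [2,8,9,10,11],
     [3,4,5,6,8], [3,4,5,10,11], [3,4,6,7,10], [3,4,6,9,11], [3,4,7,8,9], [3,5,6,7,11],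
     [3,5,7,9,10], [3,5,8,9,11], [3,6,8,9,10], [3,7,8,10,11], [4,5,6,7,9], [4,5,7,8,11],
     [4,5,8,9,10], [4,6,8,10,11], [4,7,9,10,11], [5,6,7,8,10], [5,6,9,10,11], [6,7,8,9,11]]"

lemma steiner_4_5_11_blocks:
  "\<forall>l\<in>set steiner_4_5_11. sorted l \<and> distinct l \<and> length l = 5 \<and> set l \<subseteq> {1..11}"
  unfolding steiner_4_5_11_def by code_simp

lemma distinct_steiner_4_5_11: "distinct steiner_4_5_11"
  unfolding steiner_4_5_11_def by code_simp

lemma length_steiner_4_5_11: "length steiner_4_5_11 = 66"
  unfolding steiner_4_5_11_def by code_simp

lemma steiner_4_5_11_intersecting:
  "\<forall>l\<in>set steiner_4_5_11. \<forall>m\<in>set steiner_4_5_11. \<exists>x\<in>set l. x \<in> set m"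
  unfolding steiner_4_5_11_def by code_simp

lemma steiner_4_5_11_triple_count:
  "\<forall>a b c. 1 \<le> a \<and> a < b \<and> b < c \<and> c \<le> 11 \<longrightarrow>
     length (filter (\<lambda>l. a \<in> set l \<and> b \<in> set l \<and> c \<in> set l) steiner_4_5_11) = 4"
proof -
  have "\<forall>a\<in>set [1..<12]. \<forall>b\<in>set [Suc a..<12]. \<forall>c\<in>set [Suc b..<12].
      length (filter (\<lambda>l. a \<in> set l \<and> b \<in> set l \<and> c \<in> set l) steiner_4_5_11) = 4"
    unfolding steiner_4_5_11_def by code_simp
  then show ?thesis
    by auto
qed

theorem mainTheorem12:
  shows "\<exists>F :: nat set set.
           F \<subseteq> {A. A \<subseteq> {1..11} \<and> card A = 5} \<and>
           subset_regular 11 3 F \<and> uniform 5 F \<and> intersecting F \<and>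
           card F = 66 \<and>
           real (card F) = real (11 choose 5) / (1 + real (6 choose 5) / real (1 choose 0))"
proof (intro exI[of _ "set (map set steiner_4_5_11)"] conjI)
  have sorted: "\<forall>l\<in>set steiner_4_5_11. sorted l \<and> distinct l"
    using steiner_4_5_11_blocks by blast
  show "set (map set steiner_4_5_11) \<subseteq> {A. A \<subseteq> {1..11} \<and> card A = 5}"
    using steiner_4_5_11_blocks by (auto simp: distinct_card)
  show "subset_regular 11 3 (set (map set steiner_4_5_11))"
    using sorted distinct_steiner_4_5_11 steiner_4_5_11_triple_count
    by (rule subset_regular_3_set_map_set)
  show "uniform 5 (set (map set steiner_4_5_11))"
    using steiner_4_5_11_blocks by (auto simp: uniform_def distinct_card)
  show "intersecting (set (map set steiner_4_5_11))"
    using steiner_4_5_11_intersecting unfolding intersecting_def by fastforce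
  show card: "card (set (map set steiner_4_5_11)) = 66"
    using card_set_map_set_sorted[OF sorted distinct_steiner_4_5_11] length_steiner_4_5_11
    by simp
  show "real (card (set (map set steiner_4_5_11))) =
      real (11 choose 5) / (1 + real (6 choose 5) / real (1 choose 0))"
    unfolding card by (simp add: binomial_eq_0 numeral_eq_Suc)
qed

end
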